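(* Let $\lambda\in(0,1)$ and let $G$ be a finite simple connected graph with $n\ge 2$ vertices. Then $$\min_{1\le D\le n-1}\left[\frac{\lambda\left[D\lambda^{D}-\lambda-(D-1)\lambda^{D+1}\right]}{(\lambda-1)^2}+(n-D-1)\left(\lambda^{D}-D\lambda^{D}\right)\right]\;\le\; m\nu^{e}_{\lambda}(G)\;\le\;0.$$ The lower bound is attained for a broom on $n$ vertices (at its starting vertex), and the upper bound is attained for every vertex-transitive graph.
   Context: $d(u,v)$ denotes graph distance and $[u]$ the set of neighbours of $u$. $t^{e}_{\lambda}(u)=\sum_{v\in V\setminus\{u\}} d(u,v)\lambda^{d(u,v)}$. For vertices $k,l$, $s^{kl}$ is the number of shortest $k$–$l$ paths and, for an edge $uv$, $s^{kl}_{uv}$ is the number of those passing through the edge $uv$. The exponential edge betweenness of an edge $uv$ is $b^{e}_{\lambda}(uv)=\sum_{\{k,l\}}\frac{s^{kl}_{uv}}{s^{kl}}\lambda^{d(k,l)}$ over all unordered pairs $\{k,l\}$ of distinct vertices; $c^{e}_{\lambda}(u)=\sum_{v\in[u]}b^{e}_{\lambda}(uv)$. The network surplus of $u$ is $\nu^{e}_{\lambda}(u)=c^{e}_{\lambda}(u)-t^{e}_{\lambda}(u)$ and $m\nu^{e}_{\lambda}(G)=\min\{\nu^{e}_{\lambda}(u):u\in V(G)\}$. A broom on $n$ vertices (with parameter $D$, $1\le D\le n-1$) is the graph consisting of a path $u=v_0v_1\cdots v_D$ together with $n-D-1$ further vertices each adjacent only to $v_{D-1}$; $u=v_0$ is its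 starting vertex. *)

theory Defs
  imports Complex_Main
begin

definition simple_graph :: "'a set \<Rightarrow> ('a \<Rightarrow> 'a \<Rightarrow> bool) \<Rightarrow> bool" where
  "simple_graph V E \<longleftrightarrow> finite V \<and>
     (\<forall>u v. E u v \<longrightarrow> u \<in> V \<and> v \<in> V \<and> u \<noteq> v \<and> E v u)"

definition walk :: "'a set \<Rightarrow> ('a \<Rightarrow> 'a \<Rightarrow> bool) \<Rightarrow> 'a \<Rightarrow> 'a \<Rightarrow> 'a list \<Rightarrow> bool" where
  "walk V E u v xs \<longleftrightarrow> xs \<noteq> [] \<and> set xs \<subseteq> V \<and> hd xs = u \<and> last xs = v \<and>
     (\<forall>i. Suc i < length xs \<longrightarrow> E (xs ! i) (xs ! Suc i))"

definition connected_graph :: "'a set \<Rightarrow> ('a \<Rightarrow> 'a \<Rightarrow> bool) \<Rightarrow> bool" where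
  "connected_graph V E \<longleftrightarrow> (\<forall>u\<in>V. \<forall>v\<in>V. \<exists>xs. walk V E u v xs)"

definition gdist :: "'a set \<Rightarrow> ('a \<Rightarrow> 'a \<Rightarrow> bool) \<Rightarrow> 'a \<Rightarrow> 'a \<Rightarrow> nat" where
  "gdist V E u v = (LEAST n. \<exists>xs. walk V E u v xs \<and> length xs = Suc n)"

definition neighbours :: "'a set \<Rightarrow> ('a \<Rightarrow> 'a \<Rightarrow> bool) \<Rightarrow> 'a \<Rightarrow> 'a set" where
  "neighbours V E u = {v \<in> V. E u v}"

definition shortest_paths :: "'a set \<Rightarrow> ('a \<Rightarrow> 'a \<Rightarrow> bool) \<Rightarrow> 'a \<Rightarrow> 'a \<Rightarrow> 'a list set" where
  "shortest_paths V E k l = {xs. walk V E k l xs \<and> length xs = Suc (gdist V E k l)}"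

definition uses_edge :: "'a list \<Rightarrow> 'a \<Rightarrow> 'a \<Rightarrow> bool" where
  "uses_edge xs u v \<longleftrightarrow> (\<exists>i. Suc i < length xs \<and> {xs ! i, xs ! Suc i} = {u, v})"

definition num_sp :: "'a set \<Rightarrow> ('a \<Rightarrow> 'a \<Rightarrow> bool) \<Rightarrow> 'a \<Rightarrow> 'a \<Rightarrow> nat" where
  "num_sp V E k l = card (shortest_paths V E k l)"

definition num_sp_edge :: "'a set \<Rightarrow> ('a \<Rightarrow> 'a \<Rightarrow> bool) \<Rightarrow> 'a \<Rightarrow> 'a \<Rightarrow> 'a \<Rightarrow> 'a \<Rightarrow> nat" where
  "num_sp_edge V E k l u v = card {xs \<in> shortest_paths V E k l. uses_edge xs u v}"

definition exp_t :: "real \<Rightarrow> 'a set \<Rightarrow> ('a \<Rightarrow> 'a \<Rightarrow> bool) \<Rightarrow> 'a \<Rightarrow> real" where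
  "exp_t lam V E u = (\<Sum>v\<in>V - {u}. real (gdist V E u v) * lam ^ gdist V E u v)"

text \<open>Exponential edge betweenness. The sum over unordered pairs {k,l} of distinct
  vertices is written as half the sum over ordered pairs (k,l), k \<noteq> l; the summand
  is symmetric in k and l.\<close>
definition exp_edge_betw :: "real \<Rightarrow> 'a set \<Rightarrow> ('a \<Rightarrow> 'a \<Rightarrow> bool) \<Rightarrow> 'a \<Rightarrow> 'a \<Rightarrow> real" where
  "exp_edge_betw lam V E u v =
     (\<Sum>(k,l)\<in>{(k,l). k \<in> V \<and> l \<in> V \<and> k \<noteq> l}.
        real (num_sp_edge V E k l u v) / real (num_sp V E k l) * lam ^ gdist V E k l) / 2"

definition exp_c :: "real \<Rightarrow> 'a set \<Rightarrow> ('a \<Rightarrow> 'a \<Rightarrow> bool) \<Rightarrow> 'a \<Rightarrow> real" where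
  "exp_c lam V E u = (\<Sum>v\<in>neighbours V E u. exp_edge_betw lam V E u v)"

definition surplus :: "real \<Rightarrow> 'a set \<Rightarrow> ('a \<Rightarrow> 'a \<Rightarrow> bool) \<Rightarrow> 'a \<Rightarrow> real" where
  "surplus lam V E u = exp_c lam V E u - exp_t lam V E u"

definition min_surplus :: "real \<Rightarrow> 'a set \<Rightarrow> ('a \<Rightarrow> 'a \<Rightarrow> bool) \<Rightarrow> real" where
  "min_surplus lam V E = Min (surplus lam V E ` V)"

definition vertex_transitive :: "'a set \<Rightarrow> ('a \<Rightarrow> 'a \<Rightarrow> bool) \<Rightarrow> bool" where
  "vertex_transitive V E \<longleftrightarrow>
     (\<forall>u\<in>V. \<forall>v\<in>V. \<exists>f. bij_betw f V V \<and> (\<forall>x\<in>V. \<forall>y\<in>V. E x y \<longleftrightarrow> E (f x) (f y)) \<and> f u = v)"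

text \<open>Broom on n vertices with parameter D: vertices 0..n-1, path 0-1-...-D,
  and vertices D+1..n-1 each adjacent only to D-1. Starting vertex is 0.\<close>
definition broom_V :: "nat \<Rightarrow> nat set" where
  "broom_V n = {..<n}"

definition broom_E :: "nat \<Rightarrow> nat \<Rightarrow> nat \<Rightarrow> nat \<Rightarrow> bool" where
  "broom_E n D i j \<longleftrightarrow> i < n \<and> j < n \<and>
     ((i \<le> D \<and> j \<le> D \<and> (j = Suc i \<or> i = Suc j)) \<or>
      (D < i \<and> j = D - 1) \<or> (D < j \<and> i = D - 1))"

definition lower_bound_expr :: "real \<Rightarrow> nat \<Rightarrow> nat \<Rightarrow> real" where
  "lower_bound_expr lam n D =
     lam * (real D * lam ^ D - lam - (real D - 1) * lam ^ (D + 1)) / (lam - 1)^2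
     + (real n - real D - 1) * (lam ^ D - real D * lam ^ D)"

end

theory Submission
  imports Defs
begin

(* Each shortest k-l path of length d passes through exactly 2d darts, so summing the
   exponential edge betweenness over all darts counts every ordered pair with weight
   d lam^d, exactly as summing t over all vertices does. Hence the surplus sums to zero
   over V: its minimum is at most 0, with equality when the surplus is constant, as it is
   on a vertex-transitive graph.

   For the lower bound, every shortest path starting or ending at u uses an edge at u, so
   c(u) >= sum_v lam^d(u,v) and the surplus of u is at least sum_v (1 - d(u,v)) lam^d(u,v).
   The distances from u take every value 1, ..., e, and replacing the terms beyond the
   minimising distance D by the minimum gives the value at the starting vertex of the broom
   with parameter D. That vertex is a leaf, and for a leaf the estimate of c(u) is exact. *)

lemma walk_singleton: "walk V E u v [x] \<longleftrightarrow> u = x \<and> v = x \<and> x \<in> V"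
  unfolding walk_def by auto

lemma walk_Cons_Cons:
  "walk V E u v (x # y # zs) \<longleftrightarrow> u = x \<and> x \<in> V \<and> E x y \<and> walk V E y v (y # zs)"
proof
  assume "u = x \<and> x \<in> V \<and> E x y \<and> walk V E y v (y # zs)"
  then show "walk V E u v (x # y # zs)"
    unfolding walk_def by (auto simp: nth_Cons split: nat.split)
qed (auto simp: walk_def)

lemma walk_take:
  assumes "walk V E u v xs" "i < length xs"
  shows "walk V E u (xs ! i) (take (Suc i) xs)"
  using assms unfolding walk_def
  by (auto simp: hd_take last_conv_nth dest: in_set_takeD)

lemma walk_drop:
  assumes "walk V E u v xs" "i < length xs"
  shows "walk V E (xs ! i) v (drop i xs)"
  using assms unfolding walk_def
  by (auto simp: hd_drop_conv_nth dest: in_set_dropD)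

lemma walk_append:
  assumes "walk V E u w xs" "walk V E w v ys"
  shows "walk V E u v (xs @ tl ys)"
  using assms
proof (induction xs arbitrary: u)
  case Nil
  then show ?case by (simp add: walk_def)
next
  case (Cons x xs)
  show ?case
  proof (cases xs)
    case Nil
    with Cons.prems have "u = x" "w = x" by (auto simp: walk_singleton)
    moreover have "ys = w # tl ys" using Cons.prems(2) by (cases ys) (auto simp: walk_def)
    ultimately show ?thesis using Nil Cons.prems(2) by simp
  next
    case (Cons y zs)
    with Cons.prems show ?thesis using Cons.IH by (auto simp: walk_Cons_Cons)
  qed
qed

lemma walk_rev:
  assumes w: "walk V E u v xs" and sym: "\<And>a b. E a b \<Longrightarrow> E b a"
  shows "walk V E v u (rev xs)"
proof -
  have step: "E (xs ! j) (xs ! Suc j)" if "Suc j < length xs" for j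
    using w that by (simp add: walk_def)
  have "E (rev xs ! i) (rev xs ! Suc i)" if i: "Suc i < length xs" for i
  proof -
    have "Suc (length xs - Suc (Suc i)) = length xs - Suc i" using i by simp
    then show ?thesis using step[of "length xs - Suc (Suc i)"] sym i by (simp add: rev_nth)
  qed
  then show ?thesis using w by (auto simp: walk_def hd_rev last_rev)
qed

lemma walk_map:
  assumes "walk V E u v xs"
    and "\<And>x. x \<in> V \<Longrightarrow> f x \<in> W"
    and "\<And>x y. x \<in> V \<Longrightarrow> y \<in> V \<Longrightarrow> E x y \<Longrightarrow> F (f x) (f y)"
  shows "walk W F (f u) (f v) (map f xs)"
  using assms unfolding walk_def by (auto simp: hd_map last_map subset_iff)

lemma walk_potential_le:
  fixes p :: "'a \<Rightarrow> nat"
  assumes w: "walk V E a b xs" and step: "\<And>x y. E x y \<Longrightarrow> p y \<le> p x + 1"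
  shows "p b \<le> p a + (length xs - 1)"
proof -
  have "p (xs ! i) \<le> p (xs ! 0) + i" if "i < length xs" for i
    using that
  proof (induction i)
    case (Suc i)
    then have "E (xs ! i) (xs ! Suc i)" using w by (simp add: walk_def)
    with Suc show ?case using step[of "xs ! i" "xs ! Suc i"] by simp
  qed simp
  moreover have "xs \<noteq> []" "xs ! 0 = a" "xs ! (length xs - 1) = b"
    using w by (auto simp: walk_def hd_conv_nth last_conv_nth)
  ultimately show ?thesis by (metis diff_less zero_less_one length_greater_0_conv)
qed

section \<open>Distances and shortest paths\<close>

locale connected_simple_graph =
  fixes V :: "'a set" and E :: "'a \<Rightarrow> 'a \<Rightarrow> bool"
  assumes simple: "simple_graph V E" and connected: "connected_graph V E"
begin

lemma finite_V: "finite V"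
  using simple by (simp add: simple_graph_def)

lemma edge_sym: "E a b \<Longrightarrow> E b a"
  using simple by (simp add: simple_graph_def)

lemma edge_vertices: "E a b \<Longrightarrow> a \<in> V \<and> b \<in> V \<and> a \<noteq> b"
  using simple by (simp add: simple_graph_def)

lemma walk_ends_in_V: "walk V E u v xs \<Longrightarrow> u \<in> V \<and> v \<in> V"
  unfolding walk_def by (metis hd_in_set last_in_set subsetD)

lemma gdist_walk_exists:
  assumes "u \<in> V" "v \<in> V"
  shows "\<exists>xs. walk V E u v xs \<and> length xs = Suc (gdist V E u v)"
proof -
  obtain xs where "walk V E u v xs" using connected assms by (auto simp: connected_graph_def)
  then have "\<exists>n xs. walk V E u v xs \<and> length xs = Suc n"
    by (metis walk_def length_greater_0_conv Suc_pred)
  then show ?thesis unfolding gdist_def by (rule LeastI_ex)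
qed

lemma gdist_le_walk:
  assumes "walk V E u v xs"
  shows "gdist V E u v \<le> length xs - 1"
proof -
  have "length xs = Suc (length xs - 1)" using assms by (simp add: walk_def)
  then show ?thesis unfolding gdist_def using assms by (blast intro: Least_le)
qed

lemma gdist_triangle:
  assumes "u \<in> V" "w \<in> V" "v \<in> V"
  shows "gdist V E u v \<le> gdist V E u w + gdist V E w v"
proof -
  obtain xs where xs: "walk V E u w xs" "length xs = Suc (gdist V E u w)"
    using gdist_walk_exists assms by blast
  obtain ys where ys: "walk V E w v ys" "length ys = Suc (gdist V E w v)"
    using gdist_walk_exists assms by blast
  show ?thesis using gdist_le_walk[OF walk_append[OF xs(1) ys(1)]] xs ys by simp
qed

lemma gdist_commute:
  assumes "u \<in> V" "v \<in> V"
  shows "gdist V E v u = gdist V E u v"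
proof -
  have "gdist V E y x \<le> gdist V E x y" if xy: "x \<in> V" "y \<in> V" for x y
  proof -
    obtain xs where "walk V E x y xs" "length xs = Suc (gdist V E x y)"
      using gdist_walk_exists xy by blast
    then show ?thesis using gdist_le_walk[OF walk_rev[OF _ edge_sym]] by fastforce
  qed
  then show ?thesis using assms by (meson le_antisym)
qed

lemma gdist_eq_0_iff:
  assumes "u \<in> V" "v \<in> V"
  shows "gdist V E u v = 0 \<longleftrightarrow> u = v"
proof
  assume "gdist V E u v = 0"
  then obtain xs where "walk V E u v xs" "length xs = 1" using gdist_walk_exists assms by fastforce
  then show "u = v" by (cases xs) (auto simp: walk_def)
next
  assume "u = v"
  then have "walk V E u v [u]" using assms by (simp add: walk_def)
  from gdist_le_walk[OF this] show "gdist V E u v = 0" by simp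
qed

lemma shortest_pathsD:
  "xs \<in> shortest_paths V E k l \<Longrightarrow> walk V E k l xs \<and> length xs = Suc (gdist V E k l)"
  by (simp add: shortest_paths_def)

lemma shortest_path_subset: "xs \<in> shortest_paths V E k l \<Longrightarrow> set xs \<subseteq> V"
  by (simp add: shortest_paths_def walk_def)

lemma gdist_shortest_path_nth:
  assumes "xs \<in> shortest_paths V E k l" "i < length xs"
  shows "gdist V E k (xs ! i) = i"
proof -
  have w: "walk V E k l xs" and len: "length xs = Suc (gdist V E k l)"
    using shortest_pathsD assms by auto
  have "k \<in> V" "xs ! i \<in> V" "l \<in> V"
    using walk_ends_in_V[OF w] w assms(2) by (auto simp: walk_def)
  then have "gdist V E k l \<le> gdist V E k (xs ! i) + gdist V E (xs ! i) l"
    by (rule gdist_triangle)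
  moreover have "gdist V E k (xs ! i) \<le> i"
    using gdist_le_walk[OF walk_take[OF w assms(2)]] assms(2) by simp
  moreover have "gdist V E (xs ! i) l \<le> length xs - 1 - i"
    using gdist_le_walk[OF walk_drop[OF w assms(2)]] by simp
  ultimately show ?thesis using len assms(2) by linarith
qed

lemma distinct_shortest_path: "xs \<in> shortest_paths V E k l \<Longrightarrow> distinct xs"
  unfolding distinct_conv_nth by (metis gdist_shortest_path_nth)

lemma finite_shortest_paths: "finite (shortest_paths V E k l)"
proof -
  have "shortest_paths V E k l \<subseteq> {xs. set xs \<subseteq> V \<and> length xs = Suc (gdist V E k l)}"
    by (auto simp: shortest_paths_def walk_def)
  then show ?thesis using finite_lists_length_eq[OF finite_V] finite_subset by blast
qed

lemma num_sp_pos: "k \<in> V \<Longrightarrow> l \<in> V \<Longrightarrow> num_sp V E k l > 0"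
  unfolding num_sp_def using gdist_walk_exists finite_shortest_paths
  by (auto simp: card_gt_0_iff shortest_paths_def)

lemma num_sp_edge_le_num_sp: "num_sp_edge V E k l u v \<le> num_sp V E k l"
  unfolding num_sp_edge_def num_sp_def using finite_shortest_paths by (intro card_mono) auto

lemma finite_neighbours: "finite (neighbours V E u)"
  using finite_V by (simp add: neighbours_def)

end

section \<open>The surplus sums to zero\<close>

context connected_simple_graph
begin

definition vertex_pairs :: "('a \<times> 'a) set" where
  "vertex_pairs = {(k, l). k \<in> V \<and> l \<in> V \<and> k \<noteq> l}"

definition pair_load :: "real \<Rightarrow> 'a \<Rightarrow> 'a \<times> 'a \<Rightarrow> real" where
  "pair_load lam u p =
     (\<Sum>v\<in>neighbours V E u. real (num_sp_edge V E (fst p) (snd p) u v))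
       / real (num_sp V E (fst p) (snd p)) * lam ^ gdist V E (fst p) (snd p)"

lemma finite_vertex_pairs: "finite vertex_pairs"
  by (rule finite_subset[of _ "V \<times> V"]) (auto simp: vertex_pairs_def finite_V)

lemma exp_c_eq_sum_pair_load:
  "exp_c lam V E u = (\<Sum>p\<in>vertex_pairs. pair_load lam u p) / 2"
proof -
  have "exp_c lam V E u = (\<Sum>v\<in>neighbours V E u. \<Sum>p\<in>vertex_pairs.
          real (num_sp_edge V E (fst p) (snd p) u v) / real (num_sp V E (fst p) (snd p))
            * lam ^ gdist V E (fst p) (snd p)) / 2"
    unfolding exp_c_def exp_edge_betw_def vertex_pairs_def
    by (simp add: split_beta sum_divide_distrib)
  also have "\<dots> = (\<Sum>p\<in>vertex_pairs. pair_load lam u p) / 2"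
    unfolding pair_load_def by (subst sum.swap) (simp add: sum_divide_distrib sum_distrib_right)
  finally show ?thesis .
qed

lemma card_darts_on_shortest_path:
  assumes xs: "xs \<in> shortest_paths V E k l"
  shows "card {uv \<in> Sigma V (neighbours V E). uses_edge xs (fst uv) (snd uv)} = 2 * gdist V E k l"
proof -
  define d where "d = gdist V E k l"
  have w: "walk V E k l xs" and len: "length xs = Suc d"
    using shortest_pathsD[OF xs] by (auto simp: d_def)
  define dart where "dart = (\<lambda>(i, b). if b then (xs ! i, xs ! Suc i) else (xs ! Suc i, xs ! i))"
  have darts: "{uv \<in> Sigma V (neighbours V E). uses_edge xs (fst uv) (snd uv)}
      = dart ` ({..<d} \<times> UNIV)"
  proof (intro equalityI subsetI)
    fix uv assume "uv \<in> {uv \<in> Sigma V (neighbours V E). uses_edge xs (fst uv) (snd uv)}"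
    then obtain i where i: "Suc i < length xs" "{xs ! i, xs ! Suc i} = {fst uv, snd uv}"
      by (auto simp: uses_edge_def)
    then have "uv = dart (i, True) \<or> uv = dart (i, False)"
      by (auto simp: dart_def doubleton_eq_iff prod_eq_iff)
    then show "uv \<in> dart ` ({..<d} \<times> UNIV)"
      using i len by force
  next
    fix uv assume "uv \<in> dart ` ({..<d} \<times> UNIV)"
    then obtain i b where i: "i < d" and uv: "uv = dart (i, b)" by auto
    then have "E (xs ! i) (xs ! Suc i)" using w len by (simp add: walk_def)
    moreover have "uses_edge xs (fst uv) (snd uv)"
      unfolding uses_edge_def using i uv len by (intro exI[of _ i]) (auto simp: dart_def)
    ultimately show "uv \<in> {uv \<in> Sigma V (neighbours V E). uses_edge xs (fst uv) (snd uv)}"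
      using uv edge_vertices edge_sym by (auto simp: dart_def neighbours_def)
  qed
  have "inj_on dart ({..<d} \<times> UNIV)"
  proof (rule inj_onI, clarify)
    fix i b j c assume "i < d" "j < d" "dart (i, b) = dart (j, c)"
    moreover have "xs ! a = xs ! a' \<longleftrightarrow> a = a'" if "a < length xs" "a' < length xs" for a a'
      using distinct_shortest_path[OF xs] that by (simp add: nth_eq_iff_index_eq)
    ultimately show "i = j \<and> b = c"
      using len by (cases b; cases c) (auto simp: dart_def)
  qed
  then have "card (dart ` ({..<d} \<times> UNIV)) = 2 * d"
    by (simp add: card_image card_cartesian_product)
  then show ?thesis using darts by (simp add: d_def)
qed

lemma sum_num_sp_edge:
  assumes "k \<in> V" "l \<in> V"
  shows "(\<Sum>u\<in>V. \<Sum>v\<in>neighbours V E u. real (num_sp_edge V E k l u v))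
       = 2 * real (gdist V E k l) * real (num_sp V E k l)"
proof -
  let ?S = "shortest_paths V E k l"
  let ?use = "\<lambda>xs uv. if uses_edge xs (fst uv) (snd uv) then 1 else 0 :: real"
  have "(\<Sum>u\<in>V. \<Sum>v\<in>neighbours V E u. real (num_sp_edge V E k l u v))
      = (\<Sum>u\<in>V. \<Sum>v\<in>neighbours V E u. \<Sum>xs\<in>?S. ?use xs (u, v))"
    unfolding num_sp_edge_def using finite_shortest_paths
    by (simp add: sum.inter_filter[symmetric])
  also have "\<dots> = (\<Sum>uv\<in>Sigma V (neighbours V E). \<Sum>xs\<in>?S. ?use xs uv)"
    using finite_V finite_neighbours by (simp add: sum.Sigma split_beta)
  also have "\<dots> = (\<Sum>xs\<in>?S. \<Sum>uv\<in>Sigma V (neighbours V E). ?use xs uv)"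
    by (rule sum.swap)
  also have "\<dots> = (\<Sum>xs\<in>?S. real (2 * gdist V E k l))"
  proof (rule sum.cong[OF refl])
    fix xs assume "xs \<in> ?S"
    then show "(\<Sum>uv\<in>Sigma V (neighbours V E). ?use xs uv) = real (2 * gdist V E k l)"
      using card_darts_on_shortest_path[of xs k l] finite_V finite_neighbours
      by (simp add: sum.inter_filter[symmetric])
  qed
  finally show ?thesis by (simp add: num_sp_def)
qed

lemma sum_pair_load:
  assumes "p \<in> vertex_pairs"
  shows "(\<Sum>u\<in>V. pair_load lam u p)
           = 2 * real (gdist V E (fst p) (snd p)) * lam ^ gdist V E (fst p) (snd p)"
  using assms sum_num_sp_edge[of "fst p" "snd p"] num_sp_pos[of "fst p" "snd p"]
  unfolding pair_load_def vertex_pairs_def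
  by (auto simp: sum_distrib_right[symmetric] sum_divide_distrib[symmetric])

lemma sum_exp_c:
  "(\<Sum>u\<in>V. exp_c lam V E u)
     = (\<Sum>p\<in>vertex_pairs. real (gdist V E (fst p) (snd p)) * lam ^ gdist V E (fst p) (snd p))"
proof -
  have "(\<Sum>u\<in>V. exp_c lam V E u) = (\<Sum>p\<in>vertex_pairs. \<Sum>u\<in>V. pair_load lam u p) / 2"
    unfolding exp_c_eq_sum_pair_load sum_divide_distrib[symmetric] by (rule arg_cong[OF sum.swap])
  then show ?thesis by (simp add: sum_pair_load sum_distrib_left[symmetric] mult.assoc)
qed

lemma sum_exp_t:
  "(\<Sum>u\<in>V. exp_t lam V E u)
     = (\<Sum>p\<in>vertex_pairs. real (gdist V E (fst p) (snd p)) * lam ^ gdist V E (fst p) (snd p))"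
proof -
  have "Sigma V (\<lambda>u. V - {u}) = vertex_pairs" by (auto simp: vertex_pairs_def)
  then show ?thesis unfolding exp_t_def using finite_V by (simp add: sum.Sigma split_beta)
qed

lemma sum_surplus: "(\<Sum>u\<in>V. surplus lam V E u) = 0"
  unfolding surplus_def by (simp add: sum_subtractf sum_exp_c sum_exp_t)

end

section \<open>A lower bound for the surplus of a single vertex\<close>

definition surplus_term :: "real \<Rightarrow> nat \<Rightarrow> real" where
  "surplus_term lam d = (1 - real d) * lam ^ d"

context connected_simple_graph
begin

lemma shortest_path_endpoint_edge:
  assumes xs: "xs \<in> shortest_paths V E k l" and "k \<noteq> l" "u \<in> {k, l}"
  shows "\<exists>v\<in>neighbours V E u. uses_edge xs u v"
proof -
  have w: "walk V E k l xs" and len: "length xs = Suc (gdist V E k l)"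
    using shortest_pathsD[OF xs] by auto
  have "gdist V E k l \<noteq> 0" using gdist_eq_0_iff walk_ends_in_V[OF w] \<open>k \<noteq> l\<close> by blast
  then obtain j where j: "length xs = Suc (Suc j)" using len not0_implies_Suc by auto
  have hd: "xs ! 0 = k" and last: "xs ! Suc j = l"
    using w j by (auto simp: walk_def hd_conv_nth last_conv_nth)
  have "E (xs ! 0) (xs ! 1)" "E (xs ! j) (xs ! Suc j)" using w j by (auto simp: walk_def)
  then have "xs ! 1 \<in> neighbours V E k" "xs ! j \<in> neighbours V E l"
    using hd last edge_sym[of "xs ! j" l] edge_vertices by (auto simp: neighbours_def)
  moreover have "uses_edge xs k (xs ! 1)"
    unfolding uses_edge_def using j hd by (intro exI[of _ 0]) auto
  moreover have "uses_edge xs l (xs ! j)"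
    unfolding uses_edge_def using j last by (intro exI[of _ j]) (auto simp: insert_commute)
  ultimately show ?thesis using \<open>u \<in> {k, l}\<close> by blast
qed

lemma num_sp_le_sum_num_sp_edge_endpoint:
  assumes "k \<noteq> l" "u \<in> {k, l}"
  shows "num_sp V E k l \<le> (\<Sum>v\<in>neighbours V E u. num_sp_edge V E k l u v)"
proof -
  have "num_sp V E k l
      \<le> card (\<Union>v\<in>neighbours V E u. {xs \<in> shortest_paths V E k l. uses_edge xs u v})"
    unfolding num_sp_def using shortest_path_endpoint_edge[OF _ assms] finite_neighbours
      finite_shortest_paths
    by (intro card_mono) auto
  also have "\<dots> \<le> (\<Sum>v\<in>neighbours V E u. num_sp_edge V E k l u v)"
    unfolding num_sp_edge_def using finite_neighbours by (rule card_UN_le)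
  finally show ?thesis .
qed

lemma pair_load_nonneg: "lam \<ge> 0 \<Longrightarrow> pair_load lam u p \<ge> 0"
  unfolding pair_load_def by (intro mult_nonneg_nonneg divide_nonneg_nonneg sum_nonneg) auto

lemma pair_load_endpoint_ge:
  assumes "lam \<ge> 0" "k \<in> V" "l \<in> V" "k \<noteq> l" "u \<in> {k, l}"
  shows "lam ^ gdist V E k l \<le> pair_load lam u (k, l)"
proof -
  have "real (num_sp V E k l) \<le> (\<Sum>v\<in>neighbours V E u. real (num_sp_edge V E k l u v))"
    using num_sp_le_sum_num_sp_edge_endpoint[OF assms(4,5)] by (metis of_nat_le_iff of_nat_sum)
  then have "1 \<le> (\<Sum>v\<in>neighbours V E u. real (num_sp_edge V E k l u v)) / real (num_sp V E k l)"
    using num_sp_pos[OF assms(2,3)] by simp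
  then show ?thesis
    unfolding pair_load_def using assms(1) mult_right_mono[of 1] by fastforce
qed

text \<open>A shortest path through a leaf u other than at its ends would enter and leave u through
  its only neighbour, visiting that neighbour twice.\<close>
lemma num_sp_edge_leaf_eq_0:
  assumes leaf: "neighbours V E u = {w}" and "k \<noteq> u" "l \<noteq> u"
  shows "num_sp_edge V E k l u w = 0"
proof -
  have "\<not> uses_edge xs u w" if xs: "xs \<in> shortest_paths V E k l" for xs
  proof
    assume "uses_edge xs u w"
    then obtain m where m: "Suc m < length xs" "u \<in> {xs ! m, xs ! Suc m}"
      unfolding uses_edge_def by blast
    then obtain j where j: "j < length xs" "xs ! j = u" by (metis Suc_lessD insertE singletonD)
    have xs_walk: "walk V E k l xs" using shortest_pathsD[OF xs] by simp
    then have "xs ! 0 = k" "xs ! (length xs - 1) = l"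
      by (auto simp: walk_def hd_conv_nth last_conv_nth)
    then have "j \<noteq> 0" "j \<noteq> length xs - 1" using j \<open>k \<noteq> u\<close> \<open>l \<noteq> u\<close> by metis+
    then obtain i where i: "j = Suc i" "Suc j < length xs"
      using j(1) by (cases j) auto
    have "E u (xs ! i)" "E u (xs ! Suc j)"
      using xs_walk i j edge_sym[of "xs ! i" u] by (auto simp: walk_def)
    then have "xs ! i \<in> neighbours V E u" "xs ! Suc j \<in> neighbours V E u"
      using edge_vertices by (auto simp: neighbours_def)
    then have "xs ! i = xs ! Suc j" using leaf by simp
    then show False
      using distinct_shortest_path[OF xs] i by (simp add: nth_eq_iff_index_eq)
  qed
  then have "{xs \<in> shortest_paths V E k l. uses_edge xs u w} = {}" by blast
  then show ?thesis unfolding num_sp_edge_def by (simp only: card.empty)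
qed

lemma pair_load_leaf_le:
  assumes "neighbours V E u = {w}" "lam \<ge> 0" "k \<in> V" "l \<in> V"
  shows "pair_load lam u (k, l) \<le> lam ^ gdist V E k l"
proof -
  have "real (num_sp_edge V E k l u w) / real (num_sp V E k l) \<le> 1"
    using num_sp_edge_le_num_sp num_sp_pos[OF assms(3,4)] by simp
  then show ?thesis
    unfolding pair_load_def assms(1) using assms(2) mult_right_mono[of _ 1] by fastforce
qed

lemma pair_load_leaf_eq_0:
  assumes "neighbours V E u = {w}" "k \<noteq> u" "l \<noteq> u"
  shows "pair_load lam u (k, l) = 0"
  unfolding pair_load_def assms(1) using num_sp_edge_leaf_eq_0[OF assms] by simp

lemma exp_c_split:
  assumes "u \<in> V"
  shows "exp_c lam V E u = ((\<Sum>l\<in>V - {u}. pair_load lam u (u, l)) + (\<Sum>k\<in>V - {u}. pair_load lam u (k, u))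
           + (\<Sum>p\<in>vertex_pairs - (Pair u ` (V - {u}) \<union> (\<lambda>k. (k, u)) ` (V - {u})). pair_load lam u p)) / 2"
proof -
  let ?A = "Pair u ` (V - {u})" and ?B = "(\<lambda>k. (k, u)) ` (V - {u})"
  have "?A \<union> ?B \<subseteq> vertex_pairs" using assms by (auto simp: vertex_pairs_def)
  then have "(\<Sum>p\<in>vertex_pairs. pair_load lam u p)
      = (\<Sum>p\<in>vertex_pairs - (?A \<union> ?B). pair_load lam u p) + (\<Sum>p\<in>?A \<union> ?B. pair_load lam u p)"
    using sum.subset_diff finite_vertex_pairs by blast
  also have "(\<Sum>p\<in>?A \<union> ?B. pair_load lam u p)
      = (\<Sum>p\<in>?A. pair_load lam u p) + (\<Sum>p\<in>?B. pair_load lam u p)"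
    using finite_V by (intro sum.union_disjoint) auto
  also have "(\<Sum>p\<in>?A. pair_load lam u p) = (\<Sum>l\<in>V - {u}. pair_load lam u (u, l))"
    by (subst sum.reindex) (auto simp: inj_on_def)
  also have "(\<Sum>p\<in>?B. pair_load lam u p) = (\<Sum>k\<in>V - {u}. pair_load lam u (k, u))"
    by (subst sum.reindex) (auto simp: inj_on_def)
  finally show ?thesis unfolding exp_c_eq_sum_pair_load by simp
qed

lemma pair_load_at_vertex:
  assumes "lam \<ge> 0" "u \<in> V" "l \<in> V - {u}"
  shows "lam ^ gdist V E u l \<le> pair_load lam u (u, l)" "lam ^ gdist V E u l \<le> pair_load lam u (l, u)"
  using pair_load_endpoint_ge[of lam u l u] pair_load_endpoint_ge[of lam l u u]
    gdist_commute[of u l] assms by auto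

lemma exp_c_ge:
  assumes "u \<in> V" "lam \<ge> 0"
  shows "(\<Sum>l\<in>V - {u}. lam ^ gdist V E u l) \<le> exp_c lam V E u"
proof -
  have "(\<Sum>l\<in>V - {u}. lam ^ gdist V E u l) \<le> (\<Sum>l\<in>V - {u}. pair_load lam u (u, l))"
    "(\<Sum>l\<in>V - {u}. lam ^ gdist V E u l) \<le> (\<Sum>k\<in>V - {u}. pair_load lam u (k, u))"
    using pair_load_at_vertex[OF assms(2,1)] by (auto intro!: sum_mono)
  moreover have "0 \<le> (\<Sum>p\<in>vertex_pairs - (Pair u ` (V - {u}) \<union> (\<lambda>k. (k, u)) ` (V - {u})).
      pair_load lam u p)"
    using pair_load_nonneg assms by (intro sum_nonneg) auto
  ultimately show ?thesis unfolding exp_c_split[OF assms(1)] by (simp add: field_simps)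
qed

lemma exp_c_leaf:
  assumes "u \<in> V" "lam \<ge> 0" and leaf: "neighbours V E u = {w}"
  shows "exp_c lam V E u = (\<Sum>l\<in>V - {u}. lam ^ gdist V E u l)"
proof -
  have "pair_load lam u (u, l) = lam ^ gdist V E u l" "pair_load lam u (l, u) = lam ^ gdist V E u l"
    if "l \<in> V - {u}" for l
    using pair_load_at_vertex[OF assms(2,1) that] pair_load_leaf_le[OF leaf assms(2), of u l]
      pair_load_leaf_le[OF leaf assms(2), of l u] gdist_commute[of u l] assms(1) that
    by auto
  moreover have "(\<Sum>p\<in>vertex_pairs - (Pair u ` (V - {u}) \<union> (\<lambda>k. (k, u)) ` (V - {u})).
      pair_load lam u p) = 0"
  proof (intro sum.neutral ballI)
    fix p assume p: "p \<in> vertex_pairs - (Pair u ` (V - {u}) \<union> (\<lambda>k. (k, u)) ` (V - {u}))"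
    obtain k l where kl: "p = (k, l)" by fastforce
    then have "k \<noteq> u" "l \<noteq> u" using p by (auto simp: vertex_pairs_def)
    then show "pair_load lam u p = 0" using pair_load_leaf_eq_0[OF leaf] kl by simp
  qed
  ultimately show ?thesis unfolding exp_c_split[OF assms(1)] by simp
qed

lemma surplus_ge_sum_surplus_term:
  assumes "u \<in> V" "lam \<ge> 0"
  shows "(\<Sum>l\<in>V - {u}. surplus_term lam (gdist V E u l)) \<le> surplus lam V E u"
  using exp_c_ge[OF assms] unfolding surplus_def exp_t_def surplus_term_def
  by (simp add: left_diff_distrib sum_subtractf)

lemma surplus_leaf:
  assumes "u \<in> V" "lam \<ge> 0" "neighbours V E u = {w}"
  shows "surplus lam V E u = (\<Sum>l\<in>V - {u}. surplus_term lam (gdist V E u l))"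
  using exp_c_leaf[OF assms] unfolding surplus_def exp_t_def surplus_term_def
  by (simp add: left_diff_distrib sum_subtractf)

lemma gdist_values_downward_closed:
  assumes u: "u \<in> V" and v: "v \<in> V - {u}" and d: "1 \<le> d" "d \<le> gdist V E u v"
  shows "d \<in> gdist V E u ` (V - {u})"
proof -
  obtain xs where "walk V E u v xs" "length xs = Suc (gdist V E u v)"
    using gdist_walk_exists u v by blast
  then have xs: "xs \<in> shortest_paths V E u v" and "d < length xs" "xs ! d \<in> V"
    using d by (auto simp: shortest_paths_def walk_def)
  moreover have "gdist V E u (xs ! d) = d" using gdist_shortest_path_nth[OF xs \<open>d < length xs\<close>] .
  ultimately show ?thesis using d gdist_eq_0_iff[OF u u] by force
qed

end

section \<open>The extremal distance profile\<close>

lemma sum_comp_ge_sum_image: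
  fixes f :: "'b \<Rightarrow> real"
  assumes "finite A" and lb: "\<forall>a\<in>A. c \<le> f (h a)"
  shows "sum f (h ` A) + (real (card A) - real (card (h ` A))) * c \<le> (\<Sum>a\<in>A. f (h a))"
proof -
  define S where "S = inv_into A h ` h ` A"
  have S: "S \<subseteq> A" "inj_on (inv_into A h) (h ` A)"
    unfolding S_def by (auto simp: inv_into_into inj_on_inv_into)
  then have "card S = card (h ` A)" unfolding S_def by (simp add: card_image)
  have "sum f (h ` A) = (\<Sum>a\<in>S. f (h a))"
    unfolding S_def using S(2) by (simp add: sum.reindex f_inv_into_f)
  moreover have "real (card (A - S)) = real (card A) - real (card (h ` A))"
    using \<open>card S = card (h ` A)\<close> S(1) \<open>finite A\<close> card_image_le[of A h]
    by (simp add: card_Diff_subset finite_subset of_nat_diff)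
  then have "(real (card A) - real (card (h ` A))) * c \<le> (\<Sum>a\<in>A - S. f (h a))"
    using lb sum_bounded_below[of "A - S" c "\<lambda>a. f (h a)"] by simp
  ultimately show ?thesis
    using sum.subset_diff[OF S(1) \<open>finite A\<close>, of "\<lambda>a. f (h a)"] by linarith
qed

lemma sum_atLeastAtMost_ge_prefix:
  fixes f :: "nat \<Rightarrow> real"
  assumes "m \<le> e" and "\<forall>d\<in>{m<..e}. f m \<le> f d"
  shows "(\<Sum>d=1..m. f d) + (real e - real m) * f m \<le> (\<Sum>d=1..e. f d)"
proof -
  have "{1..e} = {1..m} \<union> {m<..e}" "{1..m} \<inter> {m<..e} = {}" using assms(1) by auto
  then have "(\<Sum>d=1..e. f d) = (\<Sum>d=1..m. f d) + (\<Sum>d\<in>{m<..e}. f d)"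
    by (simp add: sum.union_disjoint)
  moreover have "real (card {m<..e}) * f m \<le> (\<Sum>d\<in>{m<..e}. f d)"
    using assms(2) by (intro sum_bounded_below) auto
  ultimately show ?thesis using assms(1) by (simp add: of_nat_diff)
qed

text \<open>If the values of h on A are 1, ..., e, then all of them occur and the remaining
  card A - e terms are at least the least value f m; the terms beyond m are at least f m too.\<close>
lemma sum_downward_closed_values_ge:
  fixes h :: "'b \<Rightarrow> nat" and f :: "nat \<Rightarrow> real"
  assumes fin: "finite A" and "A \<noteq> {}" and pos: "\<forall>a\<in>A. 1 \<le> h a"
    and closed: "\<forall>a\<in>A. \<forall>d. 1 \<le> d \<and> d \<le> h a \<longrightarrow> d \<in> h ` A"
  shows "\<exists>m\<in>{1..card A}. (\<Sum>d=1..m. f d) + (real (card A) - real m) * f m \<le> (\<Sum>a\<in>A. f (h a))"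
proof -
  define e where "e = Max (h ` A)"
  have "e \<in> h ` A" unfolding e_def using fin \<open>A \<noteq> {}\<close> by simp
  moreover have "h ` A \<subseteq> {1..e}" using pos fin unfolding e_def by (auto intro: Max_ge)
  ultimately have range: "h ` A = {1..e}" using closed by auto
  then have "1 \<le> e" "e \<le> card A" using card_image_le[OF fin, of h] \<open>e \<in> h ` A\<close> by auto
  have "Min (f ` {1..e}) \<in> f ` {1..e}" using \<open>1 \<le> e\<close> by (intro Min_in) auto
  then obtain m where m: "m \<in> {1..e}" "f m = Min (f ` {1..e})" by auto
  then have "\<forall>d\<in>{1..e}. f m \<le> f d" by simp
  have "(\<Sum>d=1..e. f d) + (real (card A) - real e) * f m \<le> (\<Sum>a\<in>A. f (h a))"
    using sum_comp_ge_sum_image[OF fin, of "f m" f h] \<open>\<forall>d\<in>{1..e}. f m \<le> f d\<close> range by auto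
  moreover have "(\<Sum>d=1..m. f d) + (real e - real m) * f m \<le> (\<Sum>d=1..e. f d)"
    using sum_atLeastAtMost_ge_prefix[of m e f] m(1) \<open>\<forall>d\<in>{1..e}. f m \<le> f d\<close> by auto
  ultimately show ?thesis using m \<open>e \<le> card A\<close> by (intro bexI[of _ m]) (auto simp: algebra_simps)
qed

lemma sum_surplus_term_closed_form:
  "(lam - 1)\<^sup>2 * (\<Sum>d=1..D. surplus_term lam d)
     = lam * (real D * lam ^ D - lam - (real D - 1) * lam ^ (D + 1))"
proof (induction D)
  case (Suc D)
  have "(lam - 1)\<^sup>2 * (\<Sum>d=1..Suc D. surplus_term lam d)
      = (lam - 1)\<^sup>2 * (\<Sum>d=1..D. surplus_term lam d) + (lam - 1)\<^sup>2 * surplus_term lam (Suc D)"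
    by (simp add: distrib_left)
  also have "\<dots> = lam * (real (Suc D) * lam ^ Suc D - lam - (real (Suc D) - 1) * lam ^ (Suc D + 1))"
    unfolding Suc.IH by (simp add: surplus_term_def algebra_simps power2_eq_square)
  finally show ?case .
qed simp

lemma lower_bound_expr_eq_sum:
  assumes "lam \<noteq> 1"
  shows "lower_bound_expr lam n D
           = (\<Sum>d=1..D. surplus_term lam d) + (real n - real D - 1) * surplus_term lam D"
proof -
  have "(\<Sum>d=1..D. surplus_term lam d)
      = lam * (real D * lam ^ D - lam - (real D - 1) * lam ^ (D + 1)) / (lam - 1)\<^sup>2"
    using sum_surplus_term_closed_form[of lam D] assms by (simp add: field_simps)
  then show ?thesis unfolding lower_bound_expr_def surplus_term_def by (simp add: algebra_simps)
qed

context connected_simple_graph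
begin

lemma surplus_ge_lower_bound:
  assumes u: "u \<in> V" and lam: "0 < lam" "lam < 1" and n: "card V = n" "n \<ge> 2"
  shows "Min (lower_bound_expr lam n ` {1..n-1}) \<le> surplus lam V E u"
proof -
  let ?A = "V - {u}" and ?h = "gdist V E u"
  have card_A: "card ?A = n - 1" using n u finite_V by simp
  then have ne: "?A \<noteq> {}" using n by (intro notI) simp
  have pos: "\<forall>a\<in>?A. 1 \<le> ?h a" using gdist_eq_0_iff u by (auto simp: Suc_le_eq)
  have closed: "\<forall>a\<in>?A. \<forall>d. 1 \<le> d \<and> d \<le> ?h a \<longrightarrow> d \<in> ?h ` ?A"
    using gdist_values_downward_closed u by blast
  obtain m where m: "m \<in> {1..n-1}"
    "(\<Sum>d=1..m. surplus_term lam d) + (real (n - 1) - real m) * surplus_term lam m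
       \<le> (\<Sum>a\<in>?A. surplus_term lam (?h a))"
    using sum_downward_closed_values_ge[OF _ ne pos closed, of "surplus_term lam"] finite_V
    unfolding card_A by blast
  have "Min (lower_bound_expr lam n ` {1..n-1}) \<le> lower_bound_expr lam n m"
    using m(1) by (intro Min_le) auto
  also have "\<dots> \<le> (\<Sum>a\<in>?A. surplus_term lam (?h a))"
    using m(2) n lower_bound_expr_eq_sum[of lam n m] lam by (simp add: of_nat_diff algebra_simps)
  also have "\<dots> \<le> surplus lam V E u"
    using surplus_ge_sum_surplus_term[OF u] lam by simp
  finally show ?thesis .
qed

lemma min_surplus_attained:
  assumes "V \<noteq> {}"
  shows "\<exists>u\<in>V. min_surplus lam V E = surplus lam V E u"
proof -
  have "Min (surplus lam V E ` V) \<in> surplus lam V E ` V"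
    using finite_V assms by (intro Min_in) auto
  then show ?thesis unfolding min_surplus_def by auto
qed

lemma min_surplus_le: "u \<in> V \<Longrightarrow> min_surplus lam V E \<le> surplus lam V E u"
  unfolding min_surplus_def using finite_V by (intro Min_le) auto

lemma min_surplus_ge_lower_bound:
  assumes "0 < lam" "lam < 1" "card V = n" "n \<ge> 2"
  shows "Min (lower_bound_expr lam n ` {1..n-1}) \<le> min_surplus lam V E"
  using min_surplus_attained[of lam] surplus_ge_lower_bound[OF _ assms] assms(3,4) by fastforce

lemma min_surplus_nonpos:
  assumes "V \<noteq> {}"
  shows "min_surplus lam V E \<le> 0"
proof -
  have "real (card V) * min_surplus lam V E \<le> (\<Sum>u\<in>V. surplus lam V E u)"
    using min_surplus_le sum_bounded_below[of V "min_surplus lam V E"] by simp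
  moreover have "card V > 0" using assms finite_V by (simp add: card_gt_0_iff)
  ultimately show ?thesis using sum_surplus by (simp add: mult_le_0_iff)
qed

end

section \<open>Automorphisms preserve the surplus\<close>

lemma uses_edge_map:
  assumes "inj_on f A" "set xs \<subseteq> A" "u \<in> A" "v \<in> A"
  shows "uses_edge (map f xs) (f u) (f v) \<longleftrightarrow> uses_edge xs u v"
proof -
  have "{map f xs ! i, map f xs ! Suc i} = {f u, f v} \<longleftrightarrow> {xs ! i, xs ! Suc i} = {u, v}"
    if "Suc i < length xs" for i
    using inj_on_image_eq_iff[OF assms(1), of "{xs ! i, xs ! Suc i}" "{u, v}"] assms(2-4) that
    by (simp add: subset_iff Suc_lessD)
  then show ?thesis unfolding uses_edge_def length_map by blast
qed

context connected_simple_graph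
begin

definition automorphism :: "('a \<Rightarrow> 'a) \<Rightarrow> bool" where
  "automorphism f \<longleftrightarrow> bij_betw f V V \<and> (\<forall>x\<in>V. \<forall>y\<in>V. E x y \<longleftrightarrow> E (f x) (f y))"

lemma automorphism_inv_into:
  assumes "automorphism f"
  shows "automorphism (inv_into V f)"
proof -
  have f: "bij_betw f V V" using assms by (simp add: automorphism_def)
  have "E x y \<longleftrightarrow> E (inv_into V f x) (inv_into V f y)" if "x \<in> V" "y \<in> V" for x y
    using assms that bij_betw_inv_into_right[OF f] bij_betwE[OF bij_betw_inv_into[OF f]]
    unfolding automorphism_def by metis
  then show ?thesis using bij_betw_inv_into[OF f] by (simp add: automorphism_def)
qed

lemma automorphism_walk:
  "automorphism f \<Longrightarrow> walk V E u v xs \<Longrightarrow> walk V E (f u) (f v) (map f xs)"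
  using walk_map[of V E u v xs f V E] by (auto simp: automorphism_def bij_betw_def)

lemma gdist_automorphism:
  assumes f: "automorphism f" and "u \<in> V" "v \<in> V"
  shows "gdist V E (f u) (f v) = gdist V E u v"
proof -
  have le: "gdist V E (g x) (g y) \<le> gdist V E x y"
    if "automorphism g" "x \<in> V" "y \<in> V" for g x y
    using gdist_walk_exists[OF that(2,3)] gdist_le_walk[OF automorphism_walk[OF that(1)]] by fastforce
  have "bij_betw f V V" using f by (simp add: automorphism_def)
  then have "gdist V E u v \<le> gdist V E (f u) (f v)"
    using le[OF automorphism_inv_into[OF f], of "f u" "f v"] assms bij_betw_inv_into_left bij_betwE
    by metis
  then show ?thesis using le[OF f assms(2,3)] by simp
qed

lemma shortest_paths_automorphism_subset:
  assumes "automorphism f" "k \<in> V" "l \<in> V"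
  shows "map f ` shortest_paths V E k l \<subseteq> shortest_paths V E (f k) (f l)"
  using automorphism_walk[OF assms(1)] gdist_automorphism[OF assms]
  by (auto simp: shortest_paths_def)

lemma shortest_paths_automorphism:
  assumes f: "automorphism f" and "k \<in> V" "l \<in> V"
  shows "shortest_paths V E (f k) (f l) = map f ` shortest_paths V E k l"
proof
  let ?g = "inv_into V f"
  have bij: "bij_betw f V V" using f by (simp add: automorphism_def)
  show "shortest_paths V E (f k) (f l) \<subseteq> map f ` shortest_paths V E k l"
  proof
    fix ys assume ys: "ys \<in> shortest_paths V E (f k) (f l)"
    have "map ?g ys \<in> shortest_paths V E (?g (f k)) (?g (f l))"
      using shortest_paths_automorphism_subset[OF automorphism_inv_into[OF f], of "f k" "f l"]
        ys assms bij_betwE[OF bij] by blast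
    then have "map ?g ys \<in> shortest_paths V E k l"
      using bij_betw_inv_into_left[OF bij] assms by simp
    moreover have "map f (map ?g ys) = ys"
      using bij_betw_inv_into_right[OF bij] shortest_path_subset[OF ys] by (simp add: map_idI subset_iff)
    ultimately show "ys \<in> map f ` shortest_paths V E k l" by force
  qed
qed (rule shortest_paths_automorphism_subset[OF assms])

lemma inj_on_map_automorphism:
  "automorphism f \<Longrightarrow> inj_on (map f) (shortest_paths V E k l)"
  by (rule inj_on_mapI, rule inj_on_subset[of f V])
    (auto simp: automorphism_def bij_betw_def dest: shortest_path_subset)

lemma num_sp_automorphism:
  assumes "automorphism f" "k \<in> V" "l \<in> V"
  shows "num_sp V E (f k) (f l) = num_sp V E k l"
  unfolding num_sp_def shortest_paths_automorphism[OF assms]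
  using card_image[OF inj_on_map_automorphism[OF assms(1)]] .

lemma num_sp_edge_automorphism:
  assumes f: "automorphism f" and kl: "k \<in> V" "l \<in> V" and uv: "u \<in> V" "v \<in> V"
  shows "num_sp_edge V E (f k) (f l) (f u) (f v) = num_sp_edge V E k l u v"
proof -
  have "inj_on f V" using f by (simp add: automorphism_def bij_betw_def)
  then have "{ys \<in> shortest_paths V E (f k) (f l). uses_edge ys (f u) (f v)}
      = map f ` {xs \<in> shortest_paths V E k l. uses_edge xs u v}"
    unfolding shortest_paths_automorphism[OF f kl]
    using uses_edge_map[of f V _ u v] shortest_path_subset uv by auto
  moreover have "inj_on (map f) {xs \<in> shortest_paths V E k l. uses_edge xs u v}"
    using inj_on_map_automorphism[OF f] by (rule inj_on_subset) auto
  ultimately show ?thesis unfolding num_sp_edge_def by (simp add: card_image)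
qed

lemma bij_betw_vertex_pairs_automorphism:
  assumes "automorphism f"
  shows "bij_betw (map_prod f f) vertex_pairs vertex_pairs"
proof -
  have "inj_on f V" "f ` V = V" using assms by (auto simp: automorphism_def bij_betw_def)
  then have "inj_on (map_prod f f) vertex_pairs" "map_prod f f ` vertex_pairs \<subseteq> vertex_pairs"
    by (auto simp: vertex_pairs_def inj_on_def)
  then show ?thesis using endo_inj_surj[OF finite_vertex_pairs] by (simp add: bij_betw_def)
qed

lemma exp_edge_betw_automorphism:
  assumes f: "automorphism f" and uv: "u \<in> V" "v \<in> V"
  shows "exp_edge_betw lam V E (f u) (f v) = exp_edge_betw lam V E u v"
proof -
  define betw_term where "betw_term = (\<lambda>x y (k, l). real (num_sp_edge V E k l x y)
      / real (num_sp V E k l) * lam ^ gdist V E k l)"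
  have betw: "exp_edge_betw lam V E x y = sum (betw_term x y) vertex_pairs / 2" for x y
    unfolding exp_edge_betw_def betw_term_def vertex_pairs_def ..
  have "sum (betw_term (f u) (f v)) vertex_pairs
      = sum (betw_term (f u) (f v) \<circ> map_prod f f) vertex_pairs"
    by (simp only: comp_def sum.reindex_bij_betw[OF bij_betw_vertex_pairs_automorphism[OF f]])
  moreover have "sum (betw_term (f u) (f v) \<circ> map_prod f f) vertex_pairs = sum (betw_term u v) vertex_pairs"
    using num_sp_edge_automorphism[OF f _ _ uv] num_sp_automorphism[OF f] gdist_automorphism[OF f]
    by (intro sum.cong) (auto simp: betw_term_def vertex_pairs_def)
  ultimately show ?thesis unfolding betw by simp
qed

lemma neighbours_automorphism:
  assumes f: "automorphism f" and u: "u \<in> V"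
  shows "neighbours V E (f u) = f ` neighbours V E u"
proof -
  have bij: "bij_betw f V V" using f by (simp add: automorphism_def)
  have "neighbours V E (f u) = f ` {v \<in> V. E (f u) (f v)}"
    using bij_betw_imp_surj_on[OF bij] by (auto simp: neighbours_def)
  also have "{v \<in> V. E (f u) (f v)} = neighbours V E u"
    using f u by (auto simp: automorphism_def neighbours_def)
  finally show ?thesis .
qed

lemma surplus_automorphism:
  assumes f: "automorphism f" and u: "u \<in> V"
  shows "surplus lam V E (f u) = surplus lam V E u"
proof -
  have inj: "inj_on f V" and img: "f ` V = V" using f by (auto simp: automorphism_def bij_betw_def)
  have "inj_on f (neighbours V E u)" using inj by (rule inj_on_subset) (auto simp: neighbours_def)
  then have "exp_c lam V E (f u) = (\<Sum>v\<in>neighbours V E u. exp_edge_betw lam V E (f u) (f v))"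
    unfolding exp_c_def neighbours_automorphism[OF f u] by (simp add: sum.reindex)
  also have "\<dots> = exp_c lam V E u"
    unfolding exp_c_def using exp_edge_betw_automorphism[OF f u]
    by (intro sum.cong) (auto simp: neighbours_def)
  finally have c: "exp_c lam V E (f u) = exp_c lam V E u" .
  have "V - {f u} = f ` (V - {u})" using inj img u by (simp add: inj_on_image_set_diff)
  moreover have "inj_on f (V - {u})" using inj by (rule inj_on_subset) auto
  ultimately have "exp_t lam V E (f u)
      = (\<Sum>v\<in>V - {u}. real (gdist V E (f u) (f v)) * lam ^ gdist V E (f u) (f v))"
    unfolding exp_t_def by (simp add: sum.reindex)
  also have "\<dots> = exp_t lam V E u"
    unfolding exp_t_def using gdist_automorphism[OF f u] by (intro sum.cong) auto
  finally show ?thesis using c by (simp add: surplus_def)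
qed

lemma min_surplus_vertex_transitive:
  assumes vt: "vertex_transitive V E" and "V \<noteq> {}"
  shows "min_surplus lam V E = 0"
proof -
  obtain u where u: "u \<in> V" "min_surplus lam V E = surplus lam V E u"
    using min_surplus_attained assms(2) by blast
  have all: "surplus lam V E v = surplus lam V E u" if v: "v \<in> V" for v
  proof -
    obtain f where "bij_betw f V V \<and> (\<forall>x\<in>V. \<forall>y\<in>V. E x y \<longleftrightarrow> E (f x) (f y)) \<and> f u = v"
      using vt u(1) v unfolding vertex_transitive_def by blast
    then have "automorphism f" "f u = v" by (simp_all add: automorphism_def)
    then show ?thesis using surplus_automorphism u(1) by blast
  qed
  have "0 = (\<Sum>v\<in>V. surplus lam V E v)" using sum_surplus by simp
  also have "\<dots> = real (card V) * surplus lam V E u" using all by simp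
  finally have "real (card V) * surplus lam V E u = 0" by simp
  moreover have "card V > 0" using assms(2) finite_V by (simp add: card_gt_0_iff)
  ultimately show ?thesis using u by simp
qed

end

section \<open>Brooms\<close>

lemma lower_bound_expr_1: "lam \<noteq> 1 \<Longrightarrow> lower_bound_expr lam n 1 = 0"
  using lower_bound_expr_eq_sum[of lam n 1] by (simp add: surplus_term_def)

lemma lower_bound_expr_2_neg:
  assumes "0 < lam" "lam < 1" "n \<ge> 3"
  shows "lower_bound_expr lam n 2 < 0"
proof -
  have "lower_bound_expr lam n 2 = - (real n - 2) * lam\<^sup>2"
    using lower_bound_expr_eq_sum[of lam n 2] assms
    by (simp add: surplus_term_def numeral_2_eq_2 algebra_simps power2_eq_square)
  also have "\<dots> < 0" using assms by (intro mult_neg_pos) auto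
  finally show ?thesis .
qed

locale broom =
  fixes n D :: nat
  assumes D_pos: "1 \<le> D" and D_le: "D \<le> n - 1" and n_ge_2: "n \<ge> 2"
begin

abbreviation "BV \<equiv> broom_V n"
abbreviation "BE \<equiv> broom_E n D"

lemma walk_handle: "i \<le> D \<Longrightarrow> walk BV BE 0 i [0..<Suc i]"
  unfolding walk_def
proof (intro conjI allI impI)
  assume i: "i \<le> D"
  show "set [0..<Suc i] \<subseteq> BV" using i D_le n_ge_2 by (auto simp: broom_V_def)
  show "hd [0..<Suc i] = 0" by (simp del: upt_Suc add: upt_conv_Cons)
  fix j assume "Suc j < length [0..<Suc i]"
  then show "BE ([0..<Suc i] ! j) ([0..<Suc i] ! Suc j)" using i D_le n_ge_2
    by (simp del: upt_Suc add: nth_upt broom_E_def; linarith)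
qed simp_all

lemma walk_bristle:
  assumes "D < j" "j < n"
  shows "walk BV BE 0 j ([0..<D] @ [j])"
  unfolding walk_def
proof (intro conjI allI impI)
  show "set ([0..<D] @ [j]) \<subseteq> BV" using assms D_le by (auto simp: broom_V_def)
  show "hd ([0..<D] @ [j]) = 0" using D_pos by (simp add: hd_append upt_conv_Cons)
  fix i assume i: "Suc i < length ([0..<D] @ [j])"
  show "BE (([0..<D] @ [j]) ! i) (([0..<D] @ [j]) ! Suc i)"
  proof (cases "Suc i < D")
    case True
    then show ?thesis using D_le n_ge_2 by (simp add: nth_append broom_E_def; linarith)
  next
    case False
    then have "Suc i = D" using i by simp
    then show ?thesis using assms D_le by (simp add: nth_append broom_E_def)
  qed
qed simp_all

lemma connected_broom: "connected_graph BV BE"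
proof -
  have from_0: "\<exists>xs. walk BV BE 0 v xs" if "v \<in> BV" for v
    using walk_handle walk_bristle that by (cases "v \<le> D") (auto simp: broom_V_def not_le)
  have "walk BV BE u v (rev xs @ tl ys)" if "walk BV BE 0 u xs" "walk BV BE 0 v ys" for u v xs ys
    using walk_append[OF walk_rev[OF that(1)] that(2)] by (auto simp: broom_E_def)
  then show ?thesis unfolding connected_graph_def using from_0 by blast
qed

sublocale connected_simple_graph BV BE
  using D_pos connected_broom
  by unfold_locales (auto simp: simple_graph_def broom_V_def broom_E_def)

text \<open>Along an edge, min v D grows by at most one; this bounds the distance from 0 below.\<close>
lemma gdist_0_ge: "v \<in> BV \<Longrightarrow> min v D \<le> gdist BV BE 0 v"
  using gdist_walk_exists[of 0 v] n_ge_2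
    walk_potential_le[of BV BE 0 v _ "\<lambda>x. min x D"]
  by (force simp: broom_V_def broom_E_def)

lemma gdist_0_handle: "i \<le> D \<Longrightarrow> gdist BV BE 0 i = i"
  using gdist_le_walk[OF walk_handle[of i]] gdist_0_ge[of i] D_le n_ge_2 by (simp add: broom_V_def)

lemma gdist_0_bristle: "D < j \<Longrightarrow> j < n \<Longrightarrow> gdist BV BE 0 j = D"
  using gdist_le_walk[OF walk_bristle[of j]] gdist_0_ge[of j] by (simp add: broom_V_def)

lemma surplus_broom_start:
  assumes "2 \<le> D \<or> n = 2" "0 < lam" "lam < 1"
  shows "surplus lam BV BE 0 = lower_bound_expr lam n D"
proof -
  have "neighbours BV BE 0 = {1}"
    using assms(1) D_pos D_le unfolding neighbours_def broom_V_def broom_E_def by auto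
  then have "surplus lam BV BE 0 = (\<Sum>l\<in>BV - {0}. surplus_term lam (gdist BV BE 0 l))"
    using surplus_leaf[of 0 lam] assms n_ge_2 by (simp add: broom_V_def)
  also have "BV - {0} = {1..D} \<union> {D<..<n}" using D_le n_ge_2 by (auto simp: broom_V_def)
  also have "(\<Sum>l\<in>{1..D} \<union> {D<..<n}. surplus_term lam (gdist BV BE 0 l))
      = (\<Sum>l=1..D. surplus_term lam (gdist BV BE 0 l))
        + (\<Sum>l\<in>{D<..<n}. surplus_term lam (gdist BV BE 0 l))"
    by (rule sum.union_disjoint) auto
  also have "\<dots> = (\<Sum>l=1..D. surplus_term lam l) + (\<Sum>l\<in>{D<..<n}. surplus_term lam D)"
    using gdist_0_handle gdist_0_bristle by (intro arg_cong2[where f = "(+)"] sum.cong) auto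
  also have "\<dots> = lower_bound_expr lam n D"
    using lower_bound_expr_eq_sum[of lam n D] assms D_le n_ge_2 by (simp add: of_nat_diff)
  finally show ?thesis .
qed

end

text \<open>For D = 1 the starting vertex is the centre of a star rather than a leaf; this case is
  avoided because for n \<ge> 3 the bound is negative at D = 2 and vanishes at D = 1.\<close>
lemma broom_attains_lower_bound:
  assumes lam: "0 < lam" "lam < 1" and n: "n \<ge> 2"
  shows "\<exists>D\<in>{1..n-1}.
           surplus lam (broom_V n) (broom_E n D) 0 = Min (lower_bound_expr lam n ` {1..n-1})
         \<and> min_surplus lam (broom_V n) (broom_E n D) = Min (lower_bound_expr lam n ` {1..n-1})"
proof -
  let ?M = "Min (lower_bound_expr lam n ` {1..n-1})"
  have "?M \<in> lower_bound_expr lam n ` {1..n-1}" using n by (intro Min_in) auto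
  then obtain D where D: "D \<in> {1..n-1}" "lower_bound_expr lam n D = ?M" by auto
  have "2 \<le> D \<or> n = 2"
  proof (rule ccontr)
    assume "\<not> (2 \<le> D \<or> n = 2)"
    then have "D = 1" "n \<ge> 3" using D n by auto
    then have "lower_bound_expr lam n 2 < lower_bound_expr lam n D"
      using lower_bound_expr_1 lower_bound_expr_2_neg lam by simp
    moreover have "?M \<le> lower_bound_expr lam n 2" using \<open>n \<ge> 3\<close> by (intro Min_le) auto
    ultimately show False using D(2) by linarith
  qed
  interpret broom n D using D n by unfold_locales auto
  have start: "surplus lam BV BE 0 = ?M" using surplus_broom_start[OF \<open>2 \<le> D \<or> n = 2\<close> lam] D by simp
  have "?M \<le> min_surplus lam BV BE" by (rule min_surplus_ge_lower_bound[OF lam _ n]) (simp add: broom_V_def)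
  moreover have "min_surplus lam BV BE \<le> surplus lam BV BE 0"
    using n by (intro min_surplus_le) (simp add: broom_V_def)
  ultimately have "min_surplus lam BV BE = ?M" using start by linarith
  then show ?thesis using start D(1) by blast
qed

theorem theorem11:
  fixes lam :: real and V :: "'a set" and E :: "'a \<Rightarrow> 'a \<Rightarrow> bool" and n :: nat
  assumes "0 < lam" and "lam < 1"
    and "simple_graph V E" and "connected_graph V E"
    and "card V = n" and "n \<ge> 2"
  shows "Min (lower_bound_expr lam n ` {1..n-1}) \<le> min_surplus lam V E
         \<and> min_surplus lam V E \<le> 0
         \<and> (\<exists>D\<in>{1..n-1}.
              surplus lam (broom_V n) (broom_E n D) 0 = Min (lower_bound_expr lam n ` {1..n-1})
            \<and> min_surplus lam (broom_V n) (broom_E n D) = Min (lower_bound_expr lam n ` {1..n-1}))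
         \<and> (vertex_transitive V E \<longrightarrow> min_surplus lam V E = 0)"
proof -
  interpret connected_simple_graph V E using assms(3,4) by unfold_locales
  have "V \<noteq> {}" using assms(5,6) by auto
  then show ?thesis
    using min_surplus_ge_lower_bound[OF assms(1,2,5,6)] min_surplus_nonpos
      broom_attains_lower_bound[OF assms(1,2,6)] min_surplus_vertex_transitive
    by blast
qed

end
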